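(* Let $(\Gamma,d)$ be a countable discrete metric space admitting an $F$-function, and let $(\mathcal{A},\{\mathcal{A}_X\}_{X\in\mathcal{P}_0(\Gamma)},\Phi)$ be a quantum many-body system satisfying (A1) whose interaction $\Phi$ is bounded and has finite range. Then for every $\mu>0$ there are constants $c_\mu,v_\mu>0$ such that: for all $X,Y,\Lambda\in\mathcal{P}_0(\Gamma)$ with $X\subseteq Y\cap\Lambda$, all $A\in\mathcal{A}_X$, all $B\in\mathcal{A}_Y'\cap\mathcal{A}$ and all $t\in\mathbb{R}$, \[ \|[\alpha^t_\Lambda(A),B]\|\le c_\mu\|A\|\|B\|\,|\partial_\Phi X|\,e^{-\mu(d(X,Y^c)-v_\mu|t|)}. \]
   Context: $(\Gamma,d)$ is a countable discrete metric space, $\mathcal{P}_0(\Gamma)$ its finite subsets, $Y^c:=\Gamma\setminus Y$, $d(X,Y):=\inf\{d(x,y):x\in X,y\in Y\}$, $\mathrm{diam}(X):=\sup_{x,y\in X}d(x,y)$. An $F$-function is a non-increasing $F:[0,\infty)\to(0,\infty)$ with $\sup_{x}\sum_{y}F(d(x,y))<\infty$ and $\sup_{x,y}\sum_{z}F(d(x,z))F(d(z,y))/F(d(x,y))<\infty$. A quantum many-body system is a triple $(\mathcal{A},\{\mathcal{A}_X\},\Phi)$: $\mathcal{A}$ a unital $C^*$-algebra, $\{\mathcal{A}_X\}_{X\in\mathcal{P}_0(\Gamma)}$ an increasing net of simple $C^*$-subalgebras with norm-dense union $\mathcal{A}_{\mathrm{loc}}$, $\Phi:\mathcal{P}_0(\Gamma)\to\mathcal{A}_{\mathrm{loc}}$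 with $\Phi(X)=\Phi(X)^*\in\mathcal{A}_X$; $\mathcal{A}_\Lambda$ for $\Lambda\subseteq\Gamma$ is the $C^*$-algebra generated by the $\mathcal{A}_X$, $X\subseteq\Lambda$ finite; $\mathcal{A}_Y'\cap\mathcal{A}$ is the set of elements of $\mathcal{A}$ commuting with $\mathcal{A}_Y$. (A1): $\Phi(X)$ commutes with $\mathcal{A}_{X^c}$. $\Phi$ is bounded if $\sup_x\sum_{X\in\mathcal{P}_0(\Gamma),x\in X}\|\Phi(X)\|/|X|<\infty$ and has finite range if for some $\mathfrak{r}>0$, $\Phi(X)=0$ whenever $\mathrm{diam}(X)>\mathfrak{r}$. $H_\Lambda:=\sum_{X\subseteq\Lambda}\Phi(X)$, $\alpha^t_\Lambda(A):=e^{itH_\Lambda}Ae^{-itH_\Lambda}$. $\partial_\Phi X:=\{x\in X:\exists Z\in\mathcal{P}_0(\Gamma),\ x\in Z,\ Z\cap X^c\neq\emptyset,\ \Phi(Z)\neq0\}$. *)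

theory Defs
  imports "HOL-Analysis.Analysis"
begin

definition metric_on :: "('g \<Rightarrow> 'g \<Rightarrow> real) \<Rightarrow> bool" where
  "metric_on d \<longleftrightarrow>
     (\<forall>x y. 0 \<le> d x y) \<and> (\<forall>x y. d x y = 0 \<longleftrightarrow> x = y) \<and>
     (\<forall>x y. d x y = d y x) \<and> (\<forall>x y z. d x z \<le> d x y + d y z)"

definition countable_discrete_metric :: "('g \<Rightarrow> 'g \<Rightarrow> real) \<Rightarrow> bool" where
  "countable_discrete_metric d \<longleftrightarrow>
     metric_on d \<and> countable (UNIV :: 'g set) \<and>
     (\<forall>x. \<exists>e>0. \<forall>y. d x y < e \<longrightarrow> y = x)"

definition is_F_function :: "('g \<Rightarrow> 'g \<Rightarrow> real) \<Rightarrow> (real \<Rightarrow> real) \<Rightarrow> bool" where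
  "is_F_function d F \<longleftrightarrow>
     (\<forall>r\<ge>0. F r > 0) \<and>
     (\<forall>r s. 0 \<le> r \<longrightarrow> r \<le> s \<longrightarrow> F s \<le> F r) \<and>
     (\<exists>C. \<forall>x. (\<lambda>y. F (d x y)) summable_on UNIV \<and> (\<Sum>\<^sub>\<infinity>y. F (d x y)) \<le> C) \<and>
     (\<exists>C. \<forall>x y. (\<lambda>z. F (d x z) * F (d z y) / F (d x y)) summable_on UNIV \<and>
                 (\<Sum>\<^sub>\<infinity>z. F (d x z) * F (d z y) / F (d x y)) \<le> C)"

definition setdist_d :: "('g \<Rightarrow> 'g \<Rightarrow> real) \<Rightarrow> 'g set \<Rightarrow> 'g set \<Rightarrow> real" where
  "setdist_d d X Y = Inf {d x y | x y. x \<in> X \<and> y \<in> Y}"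

definition diam_d :: "('g \<Rightarrow> 'g \<Rightarrow> real) \<Rightarrow> 'g set \<Rightarrow> real" where
  "diam_d d X = (if X = {} then 0 else Sup {d x y | x y. x \<in> X \<and> y \<in> X})"

text \<open>The algebra is the whole type 'a, a real Banach algebra with unit, together with
  an involution st and an element j playing the role of the complex unit i*1, making it a
  complex Banach algebra with complex-homogeneous norm, satisfying the C*-identity.\<close>

definition unital_cstar_algebra ::
  "('a::{real_normed_algebra_1,banach} \<Rightarrow> 'a) \<Rightarrow> 'a \<Rightarrow> bool" where
  "unital_cstar_algebra st j \<longleftrightarrow>
     (\<forall>x y. st (x + y) = st x + st y) \<and>
     (\<forall>r x. st (scaleR r x) = scaleR r (st x)) \<and>
     (\<forall>x y. st (x * y) = st y * st x) \<and>
     (\<forall>x. st (st x) = x) \<and>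
     st j = - j \<and> j * j = - 1 \<and> (\<forall>x. j * x = x * j) \<and>
     (\<forall>a b x. norm (scaleR a x + scaleR b (j * x)) = sqrt (a\<^sup>2 + b\<^sup>2) * norm x) \<and>
     (\<forall>x. norm (st x * x) = (norm x)\<^sup>2)"

definition cstar_subalgebra ::
  "('a::{real_normed_algebra_1,banach} \<Rightarrow> 'a) \<Rightarrow> 'a \<Rightarrow> 'a set \<Rightarrow> bool" where
  "cstar_subalgebra st j S \<longleftrightarrow>
     0 \<in> S \<and> (\<forall>x\<in>S. \<forall>y\<in>S. x + y \<in> S \<and> x * y \<in> S) \<and>
     (\<forall>r. \<forall>x\<in>S. scaleR r x \<in> S) \<and> (\<forall>x\<in>S. j * x \<in> S) \<and>
     (\<forall>x\<in>S. st x \<in> S) \<and> closed S"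

definition closed_ideal_of ::
  "'a::{real_normed_algebra_1,banach} \<Rightarrow> 'a set \<Rightarrow> 'a set \<Rightarrow> bool" where
  "closed_ideal_of j S I \<longleftrightarrow>
     I \<subseteq> S \<and> 0 \<in> I \<and> (\<forall>x\<in>I. \<forall>y\<in>I. x + y \<in> I) \<and>
     (\<forall>r. \<forall>x\<in>I. scaleR r x \<in> I) \<and> (\<forall>x\<in>I. j * x \<in> I) \<and>
     (\<forall>a\<in>S. \<forall>x\<in>I. a * x \<in> I \<and> x * a \<in> I) \<and> closed I"

definition simple_cstar_subalgebra ::
  "('a::{real_normed_algebra_1,banach} \<Rightarrow> 'a) \<Rightarrow> 'a \<Rightarrow> 'a set \<Rightarrow> bool" where
  "simple_cstar_subalgebra st j S \<longleftrightarrow>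
     cstar_subalgebra st j S \<and> S \<noteq> {0} \<and>
     (\<forall>I. closed_ideal_of j S I \<longrightarrow> I = {0} \<or> I = S)"

definition cstar_generated ::
  "('a::{real_normed_algebra_1,banach} \<Rightarrow> 'a) \<Rightarrow> 'a \<Rightarrow> 'a set \<Rightarrow> 'a set" where
  "cstar_generated st j G = \<Inter>{T. cstar_subalgebra st j T \<and> G \<subseteq> T}"

definition local_alg ::
  "('a::{real_normed_algebra_1,banach} \<Rightarrow> 'a) \<Rightarrow> 'a \<Rightarrow> ('g set \<Rightarrow> 'a set) \<Rightarrow> 'g set \<Rightarrow> 'a set" where
  "local_alg st j \<A> \<Lambda> = cstar_generated st j (\<Union>{\<A> X | X. finite X \<and> X \<subseteq> \<Lambda>})"

definition qmb_system ::
  "('a::{real_normed_algebra_1,banach} \<Rightarrow> 'a) \<Rightarrow> 'a \<Rightarrow> ('g set \<Rightarrow> 'a set) \<Rightarrow> ('g set \<Rightarrow> 'a) \<Rightarrow> bool" where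
  "qmb_system st j \<A> \<Phi> \<longleftrightarrow>
     unital_cstar_algebra st j \<and>
     (\<forall>X. finite X \<longrightarrow> simple_cstar_subalgebra st j (\<A> X)) \<and>
     (\<forall>X Y. finite X \<longrightarrow> finite Y \<longrightarrow> X \<subseteq> Y \<longrightarrow> \<A> X \<subseteq> \<A> Y) \<and>
     closure (\<Union>{\<A> X | X. finite X}) = UNIV \<and>
     (\<forall>X. finite X \<longrightarrow> st (\<Phi> X) = \<Phi> X \<and> \<Phi> X \<in> \<A> X)"

definition A1 ::
  "('a::{real_normed_algebra_1,banach} \<Rightarrow> 'a) \<Rightarrow> 'a \<Rightarrow> ('g set \<Rightarrow> 'a set) \<Rightarrow> ('g set \<Rightarrow> 'a) \<Rightarrow> bool" where
  "A1 st j \<A> \<Phi> \<longleftrightarrow>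
     (\<forall>X. finite X \<longrightarrow> (\<forall>b\<in>local_alg st j \<A> (- X). \<Phi> X * b = b * \<Phi> X))"

definition bounded_interaction :: "('g set \<Rightarrow> 'a::real_normed_vector) \<Rightarrow> bool" where
  "bounded_interaction \<Phi> \<longleftrightarrow>
     (\<exists>C. \<forall>x. (\<lambda>X. norm (\<Phi> X) / real (card X)) summable_on {X. finite X \<and> x \<in> X} \<and>
              (\<Sum>\<^sub>\<infinity>X\<in>{X. finite X \<and> x \<in> X}. norm (\<Phi> X) / real (card X)) \<le> C)"

definition finite_range :: "('g \<Rightarrow> 'g \<Rightarrow> real) \<Rightarrow> ('g set \<Rightarrow> 'a::zero) \<Rightarrow> bool" where
  "finite_range d \<Phi> \<longleftrightarrow>
     (\<exists>r>0. \<forall>X. finite X \<longrightarrow> diam_d d X > r \<longrightarrow> \<Phi> X = 0)"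

definition hamiltonian :: "('g set \<Rightarrow> 'a::real_normed_algebra_1) \<Rightarrow> 'g set \<Rightarrow> 'a" where
  "hamiltonian \<Phi> \<Lambda> = (\<Sum>X\<in>Pow \<Lambda>. \<Phi> X)"

definition dynamics ::
  "'a::{real_normed_algebra_1,banach} \<Rightarrow> ('g set \<Rightarrow> 'a) \<Rightarrow> 'g set \<Rightarrow> real \<Rightarrow> 'a \<Rightarrow> 'a" where
  "dynamics j \<Phi> \<Lambda> t A =
     exp (scaleR t (j * hamiltonian \<Phi> \<Lambda>)) * A * exp (- scaleR t (j * hamiltonian \<Phi> \<Lambda>))"

definition phi_boundary :: "('g set \<Rightarrow> 'a::zero) \<Rightarrow> 'g set \<Rightarrow> 'g set" where
  "phi_boundary \<Phi> X = {x \<in> X. \<exists>Z. finite Z \<and> x \<in> Z \<and> Z \<inter> - X \<noteq> {} \<and> \<Phi> Z \<noteq> 0}"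

end

theory Submission
  imports Defs
begin

(*
  Write tau_t for conjugation by exp (t K), K the sum of the skew-adjoint terms j * Phi(Z) over
  Z in Lambda.  If K = K' + L and tau' is generated by K', Duhamel's formula in the interaction
  picture gives
    ||[tau_t(C), B]|| <= ||[tau'_t(C), B]|| + 2 ||C|| int_0^t ||[tau_s(L), B]|| ds.
  With weights w(z) = exp (-mu d(z, Y^c)) and W(Z) = sum of w over Z, take L to be the terms
  meeting a single support Z: then tau' fixes Phi(Z), and a bound
  ||[tau_s(Phi(Z)), B]|| <= S ||Phi(Z)|| W(Z) exp (2 kappa s) for all Z improves to the same bound
  with 2 ||B|| + S/2 in place of S, so it holds with S = 4 ||B||.  Here kappa bounds
  2 sum_{Z containing x} ||Phi(Z)|| W(Z) / w(x), which is finite by finite range and boundedness.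
  Then take L to be the terms straddling X: tau' decouples X from the rest, so [tau'_t(A), B] = 0,
  and every term of L meets the boundary of X, which yields the factor
  |boundary of X| exp (-mu (d(X, Y^c) - v |t|)).  Negative times use the generator built from -j.
*)

definition commutator :: "'a::ring \<Rightarrow> 'a \<Rightarrow> 'a" where
  "commutator x y = x * y - y * x"

definition evolve :: "'a::{real_normed_algebra_1,banach} \<Rightarrow> real \<Rightarrow> 'a \<Rightarrow> 'a" where
  "evolve K t X = exp (t *\<^sub>R K) * X * exp (- (t *\<^sub>R K))"

lemma norm_commutator_le:
  fixes x y :: "'a::real_normed_algebra"
  shows "norm (commutator x y) \<le> 2 * norm x * norm y"
proof -
  have "norm (commutator x y) \<le> norm (x * y) + norm (y * x)"
    unfolding commutator_def by (rule norm_triangle_ineq4)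
  also have "\<dots> \<le> norm x * norm y + norm y * norm x"
    by (intro add_mono norm_mult_ineq)
  finally show ?thesis by simp
qed

lemma commutator_sum_left: "commutator (sum f S) y = (\<Sum>a\<in>S. commutator (f a) y)"
  unfolding commutator_def by (simp add: sum_distrib_left sum_distrib_right sum_subtractf)

lemma sum_mult_commute:
  fixes f :: "'b \<Rightarrow> 'a::ring"
  assumes "\<And>a. a \<in> S \<Longrightarrow> f a * y = y * f a"
  shows "sum f S * y = y * sum f S"
  using assms by (simp add: sum_distrib_left sum_distrib_right)

lemma exp_mult_commute:
  fixes x y :: "'a::{real_normed_algebra_1,banach}"
  assumes "x * y = y * x"
  shows "exp x * y = y * exp x"
  unfolding exp_def
  by (simp add: suminf_mult[symmetric] summable_exp_generic suminf_mult2
      power_commuting_commutes[OF assms])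

lemma exp_minus_cancel_left:
  fixes x :: "'a::{real_normed_algebra_1,banach}"
  shows "exp x * (exp (- x) * y) = y" and "exp (- x) * (exp x * y) = y"
  using exp_minus_inverse[of x] exp_minus_inverse[of "- x"]
  by (simp_all add: mult.assoc[symmetric])

lemma evolve_zero_time [simp]: "evolve K 0 X = X"
  unfolding evolve_def by simp

lemma evolve_zero [simp]: "evolve K t 0 = 0"
  unfolding evolve_def by simp

lemma evolve_uminus_generator: "evolve (- K) t X = evolve K (- t) X"
  unfolding evolve_def by simp

lemma exp_scaleR_add: "exp (s *\<^sub>R K) * exp (t *\<^sub>R K) = exp ((s + t) *\<^sub>R K)"
  by (simp add: exp_add_commuting[symmetric] scaleR_add_left)

lemma evolve_evolve: "evolve K s (evolve K t X) = evolve K (s + t) X"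
proof -
  have "exp (- (t *\<^sub>R K)) * exp (- (s *\<^sub>R K)) = exp (- (t *\<^sub>R K) + - (s *\<^sub>R K))"
    by (rule exp_add_commuting[symmetric]) simp
  also have "- (t *\<^sub>R K) + - (s *\<^sub>R K) = - ((s + t) *\<^sub>R K)"
    by (simp add: scaleR_add_left)
  finally have "exp (- (t *\<^sub>R K)) * exp (- (s *\<^sub>R K)) = exp (- ((s + t) *\<^sub>R K))" .
  then show ?thesis
    unfolding evolve_def by (simp add: mult.assoc exp_scaleR_add[symmetric])
qed

lemma evolve_mult: "evolve K t (X * Y) = evolve K t X * evolve K t Y"
  unfolding evolve_def by (simp add: mult.assoc exp_minus_cancel_left)

lemma evolve_diff: "evolve K t (X - Y) = evolve K t X - evolve K t Y"
  unfolding evolve_def by (simp add: algebra_simps)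

lemma evolve_commutator:
  "evolve K t (commutator X Y) = commutator (evolve K t X) (evolve K t Y)"
  unfolding commutator_def by (simp add: evolve_diff evolve_mult)

lemma evolve_sum: "evolve K t (sum f S) = (\<Sum>a\<in>S. evolve K t (f a))"
  unfolding evolve_def by (simp add: sum_distrib_left sum_distrib_right)

lemma evolve_fixed:
  assumes "K * X = X * K"
  shows "evolve K t X = X"
proof -
  have "exp (t *\<^sub>R K) * X = X * exp (t *\<^sub>R K)"
    by (rule exp_mult_commute) (simp add: assms)
  then show ?thesis
    unfolding evolve_def by (simp add: mult.assoc exp_minus_inverse)
qed

lemma evolve_add_commuting:
  assumes "K1 * K2 = K2 * K1"
  shows "evolve (K1 + K2) t X = evolve K1 t (evolve K2 t X)"
proof -
  have "exp (t *\<^sub>R (K1 + K2)) = exp (t *\<^sub>R K1) * exp (t *\<^sub>R K2)"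
    by (simp add: scaleR_right_distrib exp_add_commuting assms)
  moreover have "exp (- (t *\<^sub>R (K1 + K2))) = exp (- (t *\<^sub>R K2)) * exp (- (t *\<^sub>R K1))"
    by (simp add: scaleR_right_distrib exp_add_commuting[symmetric] assms add.commute)
  ultimately show ?thesis
    unfolding evolve_def by (simp add: mult.assoc)
qed

lemma evolve_generator: "evolve K t K = K"
  by (rule evolve_fixed) simp

lemma has_vector_derivative_evolve:
  assumes "(Y has_vector_derivative Y') (at s within S)"
  shows "((\<lambda>s. evolve K s (Y s)) has_vector_derivative
           evolve K s (Y' + commutator K (Y s))) (at s within S)"
proof -
  have "((\<lambda>s. exp (s *\<^sub>R K) * Y s * exp (s *\<^sub>R (- K))) has_vector_derivative
      exp (s *\<^sub>R K) * Y s * (exp (s *\<^sub>R (- K)) * - K)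
      + (exp (s *\<^sub>R K) * Y' + exp (s *\<^sub>R K) * K * Y s) * exp (s *\<^sub>R (- K)))
      (at s within S)"
    by (intro has_vector_derivative_mult exp_scaleR_has_vector_derivative_right assms)
  moreover have "exp (s *\<^sub>R (- K)) * K = K * exp (s *\<^sub>R (- K))"
    by (rule exp_mult_commute) simp
  ultimately show ?thesis
    unfolding evolve_def commutator_def by (simp add: algebra_simps)
qed

lemma has_vector_derivative_interaction_picture:
  "((\<lambda>s. evolve K1 s (evolve (- (K1 + K2)) s B)) has_vector_derivative
      evolve K1 s (- commutator K2 (evolve (- (K1 + K2)) s B))) (at s)"
proof -
  define K where "K = - (K1 + K2)"
  have "((\<lambda>s. evolve K s B) has_vector_derivative evolve K s (0 + commutator K B)) (at s)"
    by (intro has_vector_derivative_evolve has_vector_derivative_const)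
  also have "evolve K s (0 + commutator K B) = commutator K (evolve K s B)"
    by (simp add: evolve_commutator evolve_generator)
  finally have "((\<lambda>s. evolve K1 s (evolve K s B)) has_vector_derivative
      evolve K1 s (commutator K (evolve K s B) + commutator K1 (evolve K s B))) (at s)"
    by (rule has_vector_derivative_evolve)
  then show ?thesis
    by (simp add: K_def commutator_def algebra_simps)
qed

locale cstar_involution =
  fixes st :: "'a::{real_normed_algebra_1,banach} \<Rightarrow> 'a"
  assumes star_add: "st (x + y) = st x + st y"
    and star_scaleR: "st (r *\<^sub>R x) = r *\<^sub>R st x"
    and star_mult: "st (x * y) = st y * st x"
    and star_star: "st (st x) = x"
    and norm_star_mult_self: "norm (st x * x) = (norm x)\<^sup>2"
begin

lemma star_one: "st 1 = 1"
  using star_mult[of "st 1" 1] by (simp add: star_star)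

lemma star_minus: "st (- x) = - st x"
  using star_scaleR[of "-1" x] by simp

lemma star_sum: "st (sum f S) = (\<Sum>a\<in>S. st (f a))"
  using star_scaleR[of 0 0] by (induction S rule: infinite_finite_induct) (simp_all add: star_add)

lemma norm_star: "norm (st x) = norm x"
proof -
  have le: "norm y \<le> norm (st y)" for y
  proof (cases "y = 0")
    case False
    have "(norm y)\<^sup>2 \<le> norm (st y) * norm y"
      using norm_star_mult_self[of y] norm_mult_ineq[of "st y" y] by simp
    then show ?thesis using False by (simp add: power2_eq_square)
  qed simp
  show ?thesis using le[of x] le[of "st x"] by (simp add: star_star)
qed

lemma bounded_linear_star: "bounded_linear st"
  by (rule bounded_linear_intro[where K=1]) (simp_all add: star_add star_scaleR norm_star)

lemma star_exp: "st (exp x) = exp (st x)"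
proof -
  have "st (x ^ n) = st x ^ n" for n
    by (induction n) (simp_all add: star_one star_mult power_commutes)
  then show ?thesis
    unfolding exp_def
    by (simp add: bounded_linear.suminf[OF bounded_linear_star summable_exp_generic] star_scaleR)
qed

lemma norm_exp_skew:
  assumes "st K = - K"
  shows "norm (exp K) = 1"
proof -
  have "st (exp K) * exp K = 1"
    using exp_minus_inverse[of "- K"] by (simp add: star_exp assms)
  then have "(norm (exp K))\<^sup>2 = 1"
    using norm_star_mult_self[of "exp K"] by simp
  then show ?thesis
    using norm_ge_zero[of "exp K"] by (simp add: power2_eq_1_iff)
qed

lemma norm_evolve_le:
  assumes "st K = - K"
  shows "norm (evolve K t X) \<le> norm X"
proof -
  have "st (t *\<^sub>R K) = - (t *\<^sub>R K)" and "st (- (t *\<^sub>R K)) = - (- (t *\<^sub>R K))"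
    by (simp_all add: star_scaleR star_minus assms)
  then have "norm (exp (t *\<^sub>R K)) = 1" and "norm (exp (- (t *\<^sub>R K))) = 1"
    by (simp_all only: norm_exp_skew)
  then show ?thesis
    unfolding evolve_def
    by (metis mult.right_neutral mult_1_left norm_mult_ineq order_trans)
qed

lemma norm_evolve:
  assumes "st K = - K"
  shows "norm (evolve K t X) = norm X"
proof -
  have "norm X = norm (evolve K (- t) (evolve K t X))"
    by (simp add: evolve_evolve)
  also have "\<dots> \<le> norm (evolve K t X)"
    by (rule norm_evolve_le[OF assms])
  finally show ?thesis
    using norm_evolve_le[OF assms] by (simp add: antisym)
qed

lemma norm_commutator_evolve_le_norm:
  assumes "st K = - K"
  shows "norm (commutator (evolve K t X) B) \<le> 2 * norm X * norm B"
  using norm_commutator_le[of "evolve K t X" B] norm_evolve[OF assms] by simp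

lemma norm_interaction_picture_derivative:
  assumes "st K1 = - K1" "st K2 = - K2"
  shows "norm (evolve K1 s (- commutator K2 (evolve (- (K1 + K2)) s B)))
           = norm (commutator (evolve (K1 + K2) s K2) B)"
proof -
  have "st (K1 + K2) = - (K1 + K2)"
    by (simp add: star_add assms)
  then have "norm (evolve K1 s (- commutator K2 (evolve (- (K1 + K2)) s B)))
               = norm (evolve (K1 + K2) s (commutator K2 (evolve (- (K1 + K2)) s B)))"
    by (simp add: norm_evolve assms)
  also have "evolve (K1 + K2) s (commutator K2 (evolve (- (K1 + K2)) s B)) = commutator (evolve (K1 + K2) s K2) B"
    by (simp only: evolve_commutator evolve_uminus_generator evolve_evolve add.right_inverse
        evolve_zero_time)
  finally show ?thesis .
qed

lemma norm_commutator_evolve_perturbation_le: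
  assumes skew: "st K1 = - K1" "st K2 = - K2" and t: "0 \<le> t"
    and g: "\<And>s. (g has_real_derivative g' s) (at s)"
    and g'_bound: "\<And>s. s \<in> {0..t} \<Longrightarrow> norm (commutator (evolve (K1 + K2) s K2) B) \<le> g' s"
  shows "norm (commutator (evolve (K1 + K2) t C) B)
           \<le> norm (commutator (evolve K1 t C) B) + 2 * norm C * (g t - g 0)"
proof -
  define K where "K = K1 + K2"
  have skew_K: "st K = - K"
    unfolding K_def by (simp add: star_add skew)
  \<comment> \<open>B in the interaction picture: only the coupling K2 moves it.\<close>
  define B_int where "B_int s = evolve K1 s (evolve (- K) s B)" for s
  have B_int_deriv: "(B_int has_vector_derivative evolve K1 s (- commutator K2 (evolve (- K) s B))) (at s)"
    for s
    unfolding B_int_def K_def by (rule has_vector_derivative_interaction_picture)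
  have B_int_change: "norm (B_int t - B) \<le> g t - g 0"
  proof (cases "t = 0")
    case False
    have "continuous_on {0..t} B_int" "continuous_on {0..t} g"
      using B_int_deriv g
      by (auto intro!: continuous_at_imp_continuous_on has_vector_derivative_continuous
                       DERIV_isCont)
    then have "norm (B_int t - B_int 0) \<le> g t - g 0"
      using t False B_int_deriv g g'_bound norm_interaction_picture_derivative[OF skew]
      by (intro differentiable_bound_general)
         (auto simp: has_real_derivative_iff_has_vector_derivative K_def)
    then show ?thesis by (simp add: B_int_def)
  qed (simp add: B_int_def)
  have "commutator (evolve K t C) B
          = evolve K t (evolve K1 (- t) (commutator (evolve K1 t C) (B_int t)))"
    by (simp add: B_int_def evolve_commutator evolve_evolve evolve_uminus_generator)
  then have "norm (commutator (evolve K t C) B) = norm (commutator (evolve K1 t C) (B_int t))"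
    by (simp add: norm_evolve skew skew_K)
  also have "commutator (evolve K1 t C) (B_int t)
               = commutator (evolve K1 t C) B + commutator (evolve K1 t C) (B_int t - B)"
    by (simp add: commutator_def algebra_simps)
  also have "norm \<dots> \<le> norm (commutator (evolve K1 t C) B) + norm (commutator (evolve K1 t C) (B_int t - B))"
    by (rule norm_triangle_ineq)
  also have "norm (commutator (evolve K1 t C) (B_int t - B)) \<le> 2 * norm C * (g t - g 0)"
    using norm_commutator_le[of "evolve K1 t C" "B_int t - B"] B_int_change
    by (simp add: norm_evolve skew) (smt (verit) mult_left_mono norm_ge_zero)
  finally show ?thesis
    unfolding K_def by simp
qed

end

lemma hamiltonian_split:
  assumes "finite \<Lambda>"
  shows "hamiltonian \<Psi> \<Lambda> = sum \<Psi> {Z \<in> Pow \<Lambda>. P Z} + sum \<Psi> {Z \<in> Pow \<Lambda>. \<not> P Z}"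
proof -
  have "{Z \<in> Pow \<Lambda>. P Z} = Pow \<Lambda> \<inter> {Z. P Z}" "{Z \<in> Pow \<Lambda>. \<not> P Z} = Pow \<Lambda> - {Z. P Z}"
    by auto
  then show ?thesis
    unfolding hamiltonian_def using sum.Int_Diff[of "Pow \<Lambda>" \<Psi> "{Z. P Z}"] assms by simp
qed

lemma sum_le_sum_covering:
  fixes f :: "'b set \<Rightarrow> real"
  assumes "finite \<Z>" "finite P" "\<And>Z. Z \<in> \<Z> \<Longrightarrow> 0 \<le> f Z" "\<And>Z. Z \<in> \<Z> \<Longrightarrow> Z \<inter> P \<noteq> {}"
  shows "sum f \<Z> \<le> (\<Sum>x\<in>P. \<Sum>Z | Z \<in> \<Z> \<and> x \<in> Z. f Z)"
proof -
  have "sum f \<Z> \<le> (\<Sum>Z\<in>\<Z>. \<Sum>x\<in>P. if x \<in> Z then f Z else 0)"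
  proof (rule sum_mono)
    fix Z assume Z: "Z \<in> \<Z>"
    then obtain x where x: "x \<in> P" "x \<in> Z" using assms(4) by blast
    have "f Z = (if x \<in> Z then f Z else 0)" using x by simp
    also have "\<dots> \<le> (\<Sum>x\<in>P. if x \<in> Z then f Z else 0)"
      by (rule member_le_sum) (use x assms Z in auto)
    finally show "f Z \<le> (\<Sum>x\<in>P. if x \<in> Z then f Z else 0)" .
  qed
  also have "\<dots> = (\<Sum>x\<in>P. \<Sum>Z\<in>\<Z>. if x \<in> Z then f Z else 0)"
    by (rule sum.swap)
  also have "\<dots> = (\<Sum>x\<in>P. \<Sum>Z | Z \<in> \<Z> \<and> x \<in> Z. f Z)"
    by (simp add: sum.If_cases assms(1) Int_def conj_commute)
  finally show ?thesis .
qed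

(* The terms Psi Z stand for j * Phi Z, or -j * Phi Z for negative times. *)
locale local_interaction = cstar_involution st
  for st :: "'a::{real_normed_algebra_1,banach} \<Rightarrow> 'a" +
  fixes \<A> :: "'g set \<Rightarrow> 'a set" and \<Psi> :: "'g set \<Rightarrow> 'a"
  assumes interaction_skew: "finite Z \<Longrightarrow> st (\<Psi> Z) = - \<Psi> Z"
    and interaction_mem: "finite Z \<Longrightarrow> \<Psi> Z \<in> \<A> Z"
    and interaction_commute:
      "finite Z \<Longrightarrow> finite V \<Longrightarrow> Z \<inter> V = {} \<Longrightarrow> a \<in> \<A> V \<Longrightarrow> \<Psi> Z * a = a * \<Psi> Z"
    and local_mono: "finite X \<Longrightarrow> finite Y \<Longrightarrow> X \<subseteq> Y \<Longrightarrow> \<A> X \<subseteq> \<A> Y"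
begin

lemma skew_sum_interaction:
  assumes "finite \<Lambda>" "\<Z> \<subseteq> Pow \<Lambda>"
  shows "st (sum \<Psi> \<Z>) = - sum \<Psi> \<Z>"
proof -
  have "finite Z" if "Z \<in> \<Z>" for Z
    using that assms finite_subset by blast
  then show ?thesis
    by (simp add: star_sum interaction_skew sum_negf)
qed

lemma skew_hamiltonian: "finite \<Lambda> \<Longrightarrow> st (hamiltonian \<Psi> \<Lambda>) = - hamiltonian \<Psi> \<Lambda>"
  unfolding hamiltonian_def by (rule skew_sum_interaction) auto

lemma interaction_commute_outside:
  assumes "finite Z" "finite Y" "Z \<subseteq> Y" "\<forall>a\<in>\<A> Y. B * a = a * B"
  shows "\<Psi> Z * B = B * \<Psi> Z"
  using assms interaction_mem local_mono by (metis subsetD)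

lemma evolve_disjoint_interactions:
  assumes "finite \<Lambda>" "Z \<subseteq> \<Lambda>"
  shows "evolve (sum \<Psi> {Z' \<in> Pow \<Lambda>. Z' \<inter> Z = {}}) t (\<Psi> Z) = \<Psi> Z"
proof -
  have "finite Z'" if "Z' \<subseteq> \<Lambda>" for Z'
    using that assms(1) finite_subset by blast
  then show ?thesis
    using assms
    by (intro evolve_fixed sum_mult_commute interaction_commute[of _ Z] interaction_mem) auto
qed

lemma commutator_evolve_decoupled:
  assumes "finite \<Lambda>" "finite X" "finite Y" "X \<subseteq> Y" "A \<in> \<A> X" "\<forall>a\<in>\<A> Y. B * a = a * B"
  shows "commutator (evolve (sum \<Psi> {Z \<in> Pow \<Lambda>. Z \<subseteq> X \<or> Z \<inter> X = {}}) t A) B = 0"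
proof -
  define K_in where "K_in = sum \<Psi> {Z \<in> Pow \<Lambda>. Z \<subseteq> X}"
  define K_out where "K_out = sum \<Psi> {Z \<in> Pow \<Lambda>. \<not> Z \<subseteq> X \<and> Z \<inter> X = {}}"
  have fin: "finite Z" if "Z \<in> Pow \<Lambda>" for Z
    using that assms(1) finite_subset by blast
  have "sum \<Psi> {Z \<in> Pow \<Lambda>. Z \<subseteq> X \<or> Z \<inter> X = {}}
          = sum \<Psi> ({Z \<in> Pow \<Lambda>. Z \<subseteq> X} \<union> {Z \<in> Pow \<Lambda>. \<not> Z \<subseteq> X \<and> Z \<inter> X = {}})"
    by (rule arg_cong[where f = "sum \<Psi>"]) auto
  also have "\<dots> = K_in + K_out"
    unfolding K_in_def K_out_def using assms(1) by (intro sum.union_disjoint) auto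
  finally have split: "sum \<Psi> {Z \<in> Pow \<Lambda>. Z \<subseteq> X \<or> Z \<inter> X = {}} = K_in + K_out" .
  have "K_out * \<Psi> Z = \<Psi> Z * K_out" if Z: "Z \<in> Pow \<Lambda>" "Z \<subseteq> X" for Z
    unfolding K_out_def
  proof (rule sum_mult_commute)
    fix Z' assume "Z' \<in> {Z \<in> Pow \<Lambda>. \<not> Z \<subseteq> X \<and> Z \<inter> X = {}}"
    then show "\<Psi> Z' * \<Psi> Z = \<Psi> Z * \<Psi> Z'"
      using Z fin by (intro interaction_commute[of Z' Z] interaction_mem) auto
  qed
  then have "K_in * K_out = K_out * K_in"
    unfolding K_in_def by (intro sum_mult_commute) auto
  then have "evolve (K_in + K_out) t A = evolve K_in t (evolve K_out t A)"
    by (rule evolve_add_commuting)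
  also have "evolve K_out t A = A"
    unfolding K_out_def
    using fin assms(2,5) by (intro evolve_fixed sum_mult_commute interaction_commute) auto
  also have "evolve K_in t B = B"
    unfolding K_in_def
    using fin assms by (intro evolve_fixed sum_mult_commute interaction_commute_outside) auto
  then have "commutator (evolve K_in t A) B = evolve K_in t (commutator A B)"
    by (simp add: evolve_commutator)
  also have "commutator A B = 0"
    using assms local_mono[of X Y] by (auto simp: commutator_def)
  finally show ?thesis
    unfolding split by simp
qed

end

lemma le_of_self_improving_bound:
  fixes f a :: "'i \<Rightarrow> real"
  assumes pos: "\<And>i. i \<in> I \<Longrightarrow> 0 < a i" and nonneg: "\<And>i. i \<in> I \<Longrightarrow> 0 \<le> f i"
    and a_priori: "\<And>i. i \<in> I \<Longrightarrow> f i \<le> M * a i"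
    and improve: "\<And>S. 0 \<le> S \<Longrightarrow> \<forall>i\<in>I. f i \<le> S * a i \<Longrightarrow> \<forall>i\<in>I. f i \<le> (c + S / 2) * a i"
    and i: "i \<in> I"
  shows "f i \<le> 2 * c * a i"
proof -
  define S where "S = (SUP i\<in>I. f i / a i)"
  have bdd: "bdd_above ((\<lambda>i. f i / a i) ` I)"
    using a_priori pos by (intro bdd_aboveI2[where M = M]) (simp add: divide_le_eq)
  have le_S: "f i / a i \<le> S" if "i \<in> I" for i
    unfolding S_def using bdd that by (rule cSUP_upper2) simp
  have S_nonneg: "0 \<le> S"
    using le_S[OF i] nonneg[OF i] pos[OF i] by (smt (verit) divide_nonneg_pos)
  have "\<forall>i\<in>I. f i \<le> S * a i"
    using le_S pos by (simp add: divide_le_eq)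
  then have "\<forall>i\<in>I. f i / a i \<le> c + S / 2"
    using improve[OF S_nonneg] pos by (simp add: divide_le_eq)
  then have "S \<le> c + S / 2"
    unfolding S_def using i by (intro cSUP_least) auto
  then have "S \<le> 2 * c" by simp
  moreover have "f i \<le> S * a i"
    using le_S[OF i] pos[OF i] by (simp add: divide_le_eq)
  ultimately show ?thesis
    using pos[OF i] by (smt (verit) mult_right_mono)
qed

(* In the application w z = exp (- mu * d(z, Y^c)). *)
locale weighted_interaction = local_interaction +
  fixes \<Lambda> Y :: "'g set" and w :: "'g \<Rightarrow> real" and \<kappa> :: real
  assumes finite_volume: "finite \<Lambda>" and finite_Y: "finite Y"
    and weight_pos: "0 < w x"
    and weight_ge_one: "x \<notin> Y \<Longrightarrow> 1 \<le> w x"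
    and rate_pos: "0 < \<kappa>"
    and weighted_norm_sum_le: "2 * (\<Sum>Z | Z \<subseteq> \<Lambda> \<and> x \<in> Z. norm (\<Psi> Z) * sum w Z) \<le> \<kappa> * w x"
begin

lemma sum_weight_nonneg: "0 \<le> sum w Z"
  using weight_pos by (simp add: sum_nonneg less_imp_le)

lemma sum_interaction_meeting_le:
  assumes "\<Z> \<subseteq> Pow \<Lambda>" "finite P" "\<And>Z. Z \<in> \<Z> \<Longrightarrow> \<Psi> Z \<noteq> 0 \<Longrightarrow> Z \<inter> P \<noteq> {}"
  shows "2 * (\<Sum>Z\<in>\<Z>. norm (\<Psi> Z) * sum w Z) \<le> \<kappa> * sum w P"
proof -
  have fin: "finite \<Z>"
    using assms(1) finite_volume finite_subset by blast
  have "(\<Sum>Z\<in>\<Z>. norm (\<Psi> Z) * sum w Z) = (\<Sum>Z | Z \<in> \<Z> \<and> \<Psi> Z \<noteq> 0. norm (\<Psi> Z) * sum w Z)"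
    using fin by (intro sum.mono_neutral_right) auto
  also have "\<dots> \<le> (\<Sum>x\<in>P. \<Sum>Z | Z \<in> {Z \<in> \<Z>. \<Psi> Z \<noteq> 0} \<and> x \<in> Z. norm (\<Psi> Z) * sum w Z)"
    using fin assms(2,3) sum_weight_nonneg by (intro sum_le_sum_covering) auto
  also have "\<dots> \<le> (\<Sum>x\<in>P. \<Sum>Z | Z \<subseteq> \<Lambda> \<and> x \<in> Z. norm (\<Psi> Z) * sum w Z)"
    using assms(1) finite_volume sum_weight_nonneg by (intro sum_mono sum_mono2) auto
  also have "\<dots> \<le> (\<Sum>x\<in>P. \<kappa> * w x / 2)"
    using weighted_norm_sum_le by (intro sum_mono) (simp add: field_simps)
  also have "\<dots> = \<kappa> * sum w P / 2"
    by (simp add: sum_distrib_left sum_divide_distrib)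
  finally show ?thesis by simp
qed

lemma norm_commutator_interaction_le:
  assumes "finite Z" "\<forall>a\<in>\<A> Y. B * a = a * B"
  shows "norm (commutator (\<Psi> Z) B) \<le> 2 * norm B * norm (\<Psi> Z) * sum w Z"
proof (cases "Z \<subseteq> Y")
  case True
  then have "commutator (\<Psi> Z) B = 0"
    using assms finite_Y interaction_commute_outside by (simp add: commutator_def)
  then show ?thesis
    using sum_weight_nonneg[of Z] by simp
next
  case False
  then obtain z where "z \<in> Z" "z \<notin> Y" by blast
  then have "1 \<le> sum w Z"
    using weight_ge_one[of z] member_le_sum[of z Z w] assms(1) weight_pos
    by (simp add: less_imp_le)
  then have "2 * norm (\<Psi> Z) * norm B \<le> 2 * norm (\<Psi> Z) * norm B * sum w Z"
    using mult_left_mono[of 1 "sum w Z" "2 * norm (\<Psi> Z) * norm B"] by simp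
  then show ?thesis
    using norm_commutator_le[of "\<Psi> Z" B] by (simp add: algebra_simps)
qed

lemma norm_commutator_evolve_sum_interaction_le:
  assumes "\<Z> \<subseteq> Pow \<Lambda>" "finite P" "\<And>Z. Z \<in> \<Z> \<Longrightarrow> \<Psi> Z \<noteq> 0 \<Longrightarrow> Z \<inter> P \<noteq> {}" "0 \<le> c"
    and bound: "\<And>Z. Z \<in> \<Z> \<Longrightarrow> Z \<noteq> {} \<Longrightarrow> \<Psi> Z \<noteq> 0 \<Longrightarrow>
                  norm (commutator (evolve E s (\<Psi> Z)) B) \<le> c * (norm (\<Psi> Z) * sum w Z)"
  shows "norm (commutator (evolve E s (sum \<Psi> \<Z>)) B) \<le> c * \<kappa> / 2 * sum w P"
proof -
  have "norm (commutator (evolve E s (sum \<Psi> \<Z>)) B) \<le> (\<Sum>Z\<in>\<Z>. norm (commutator (evolve E s (\<Psi> Z)) B))"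
    unfolding evolve_sum commutator_sum_left by (rule norm_sum)
  also have "\<dots> \<le> (\<Sum>Z\<in>\<Z>. c * (norm (\<Psi> Z) * sum w Z))"
  proof (rule sum_mono)
    fix Z assume "Z \<in> \<Z>"
    then show "norm (commutator (evolve E s (\<Psi> Z)) B) \<le> c * (norm (\<Psi> Z) * sum w Z)"
      using assms(3) bound by (cases "\<Psi> Z = 0") (auto simp: commutator_def)
  qed
  also have "\<dots> \<le> c * (\<kappa> * sum w P / 2)"
    unfolding sum_distrib_left[symmetric]
    using sum_interaction_meeting_le[OF assms(1-3)] assms(4) by (intro mult_left_mono) auto
  finally show ?thesis by simp
qed

lemma norm_commutator_evolve_interaction_improve:
  assumes B: "\<forall>a\<in>\<A> Y. B * a = a * B" and Z: "Z \<subseteq> \<Lambda>" and s: "0 \<le> s" and S: "0 \<le> S"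
    and hyp: "\<And>Z' \<sigma>. Z' \<subseteq> \<Lambda> \<Longrightarrow> Z' \<noteq> {} \<Longrightarrow> \<Psi> Z' \<noteq> 0 \<Longrightarrow> \<sigma> \<in> {0..s} \<Longrightarrow>
               norm (commutator (evolve (hamiltonian \<Psi> \<Lambda>) \<sigma> (\<Psi> Z')) B)
                 \<le> S * norm (\<Psi> Z') * sum w Z' * exp (2 * \<kappa> * \<sigma>)"
  shows "norm (commutator (evolve (hamiltonian \<Psi> \<Lambda>) s (\<Psi> Z)) B)
           \<le> (2 * norm B + S / 2) * norm (\<Psi> Z) * sum w Z * exp (2 * \<kappa> * s)"
proof -
  define K where "K = sum \<Psi> {Z' \<in> Pow \<Lambda>. Z' \<inter> Z = {}}"
  define L where "L = sum \<Psi> {Z' \<in> Pow \<Lambda>. Z' \<inter> Z \<noteq> {}}"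
  have H: "hamiltonian \<Psi> \<Lambda> = K + L"
    unfolding K_def L_def by (rule hamiltonian_split[OF finite_volume])
  have fin: "finite Z'" if "Z' \<subseteq> \<Lambda>" for Z'
    using that finite_volume finite_subset by blast
  have K_fixes: "evolve K s (\<Psi> Z) = \<Psi> Z"
    unfolding K_def using finite_volume Z by (rule evolve_disjoint_interactions)
  define g where "g \<sigma> = S * sum w Z / 4 * exp (2 * \<kappa> * \<sigma>)" for \<sigma>
  have "norm (commutator (evolve (K + L) s (\<Psi> Z)) B)
          \<le> norm (commutator (evolve K s (\<Psi> Z)) B) + 2 * norm (\<Psi> Z) * (g s - g 0)"
  proof (rule norm_commutator_evolve_perturbation_le[where g' = "\<lambda>\<sigma>. S * sum w Z * \<kappa> / 2 * exp (2 * \<kappa> * \<sigma>)"])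
    show "st K = - K" "st L = - L"
      unfolding K_def L_def using finite_volume by (auto intro: skew_sum_interaction)
    show "(g has_real_derivative S * sum w Z * \<kappa> / 2 * exp (2 * \<kappa> * \<sigma>)) (at \<sigma>)" for \<sigma>
      unfolding g_def by (auto intro!: derivative_eq_intros)
    fix \<sigma> assume \<sigma>: "\<sigma> \<in> {0..s}"
    have "norm (commutator (evolve (K + L) \<sigma> (sum \<Psi> {Z' \<in> Pow \<Lambda>. Z' \<inter> Z \<noteq> {}})) B)
            \<le> S * exp (2 * \<kappa> * \<sigma>) * \<kappa> / 2 * sum w Z"
    proof (rule norm_commutator_evolve_sum_interaction_le)
      fix Z' assume "Z' \<in> {Z' \<in> Pow \<Lambda>. Z' \<inter> Z \<noteq> {}}" "Z' \<noteq> {}" "\<Psi> Z' \<noteq> 0"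
      then show "norm (commutator (evolve (K + L) \<sigma> (\<Psi> Z')) B)
                   \<le> S * exp (2 * \<kappa> * \<sigma>) * (norm (\<Psi> Z') * sum w Z')"
        using hyp[of Z' \<sigma>] \<sigma> by (simp add: H algebra_simps)
    qed (use S fin Z in auto)
    then show "norm (commutator (evolve (K + L) \<sigma> L) B) \<le> S * sum w Z * \<kappa> / 2 * exp (2 * \<kappa> * \<sigma>)"
      unfolding L_def[symmetric] by (simp add: algebra_simps)
  qed (use s in simp)
  also have "2 * norm (\<Psi> Z) * (g s - g 0) = S / 2 * norm (\<Psi> Z) * sum w Z * (exp (2 * \<kappa> * s) - 1)"
    unfolding g_def by (simp add: algebra_simps)
  also have "norm (commutator (evolve K s (\<Psi> Z)) B) \<le> 2 * norm B * norm (\<Psi> Z) * sum w Z"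
    unfolding K_fixes using Z fin B by (intro norm_commutator_interaction_le) auto
  also have "2 * norm B * norm (\<Psi> Z) * sum w Z + S / 2 * norm (\<Psi> Z) * sum w Z * (exp (2 * \<kappa> * s) - 1)
               \<le> (2 * norm B + S / 2) * norm (\<Psi> Z) * sum w Z * exp (2 * \<kappa> * s)"
  proof -
    have "0 \<le> norm B * (norm (\<Psi> Z) * sum w Z) * (exp (2 * \<kappa> * s) - 1)"
      using s rate_pos sum_weight_nonneg[of Z] by simp
    moreover have "0 \<le> S * (norm (\<Psi> Z) * sum w Z)"
      using S sum_weight_nonneg[of Z] by simp
    ultimately show ?thesis
      by (simp add: field_simps)
  qed
  finally show ?thesis
    unfolding H by simp
qed

lemma sum_weight_pos: "Z \<subseteq> \<Lambda> \<Longrightarrow> Z \<noteq> {} \<Longrightarrow> 0 < sum w Z"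
  using finite_volume finite_subset weight_pos by (intro sum_pos) auto

lemma norm_commutator_evolve_interaction_a_priori:
  assumes Z: "Z \<subseteq> \<Lambda>" "Z \<noteq> {}" and s: "0 \<le> s"
  shows "norm (commutator (evolve (hamiltonian \<Psi> \<Lambda>) s (\<Psi> Z)) B)
           \<le> 2 * norm B / Min (w ` \<Lambda>) * (norm (\<Psi> Z) * sum w Z * exp (2 * \<kappa> * s))"
proof -
  define m where "m = Min (w ` \<Lambda>)"
  have m_pos: "0 < m"
    unfolding m_def using Z finite_volume weight_pos by (subst Min_gr_iff) auto
  obtain z where z: "z \<in> Z"
    using Z(2) by blast
  have "m \<le> w z"
    unfolding m_def using z Z(1) finite_volume by auto
  also have "w z \<le> sum w Z"
    using z Z(1) finite_volume finite_subset weight_pos by (intro member_le_sum) (auto simp: less_imp_le)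
  finally have m_le: "m \<le> sum w Z" .
  have "norm (commutator (evolve (hamiltonian \<Psi> \<Lambda>) s (\<Psi> Z)) B) \<le> 2 * norm (\<Psi> Z) * norm B"
    by (simp add: norm_commutator_evolve_le_norm skew_hamiltonian finite_volume)
  also have "\<dots> = 2 * norm B / m * (norm (\<Psi> Z) * m)"
    using m_pos by simp
  also have "\<dots> \<le> 2 * norm B / m * (norm (\<Psi> Z) * sum w Z)"
    using m_le m_pos by (intro mult_left_mono) auto
  also have "\<dots> \<le> 2 * norm B / m * (norm (\<Psi> Z) * sum w Z * exp (2 * \<kappa> * s))"
    using mult_left_mono[of 1 "exp (2 * \<kappa> * s)" "norm (\<Psi> Z) * sum w Z"] sum_weight_nonneg[of Z]
      m_pos rate_pos s
    by (intro mult_left_mono) auto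
  finally show ?thesis
    unfolding m_def .
qed

lemma norm_commutator_evolve_interaction_le:
  assumes B: "\<forall>a\<in>\<A> Y. B * a = a * B" and Z: "Z \<subseteq> \<Lambda>" "Z \<noteq> {}" and s: "0 \<le> s"
  shows "norm (commutator (evolve (hamiltonian \<Psi> \<Lambda>) s (\<Psi> Z)) B)
           \<le> 4 * norm B * norm (\<Psi> Z) * sum w Z * exp (2 * \<kappa> * s)"
proof (cases "\<Psi> Z = 0")
  case False
  define I where "I = {(Z', \<sigma>). Z' \<subseteq> \<Lambda> \<and> Z' \<noteq> {} \<and> \<Psi> Z' \<noteq> 0 \<and> \<sigma> \<in> {0..s}}"
  define f where "f = (\<lambda>(Z', \<sigma>). norm (commutator (evolve (hamiltonian \<Psi> \<Lambda>) \<sigma> (\<Psi> Z')) B))"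
  define a where "a = (\<lambda>(Z', \<sigma>). norm (\<Psi> Z') * sum w Z' * exp (2 * \<kappa> * \<sigma>))"
  have "f (Z, s) \<le> 2 * (2 * norm B) * a (Z, s)"
  proof (rule le_of_self_improving_bound[where I = I and M = "2 * norm B / Min (w ` \<Lambda>)"])
    show "(Z, s) \<in> I"
      unfolding I_def using Z False s by simp
    fix i assume "i \<in> I"
    then obtain Z' \<sigma> where i: "i = (Z', \<sigma>)" "Z' \<subseteq> \<Lambda>" "Z' \<noteq> {}" "\<Psi> Z' \<noteq> 0" "\<sigma> \<in> {0..s}"
      unfolding I_def by blast
    show "0 < a i"
      unfolding i a_def using sum_weight_pos[OF i(2,3)] i(4) by simp
    show "0 \<le> f i"
      unfolding i f_def by simp
    show "f i \<le> 2 * norm B / Min (w ` \<Lambda>) * a i"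
      unfolding i f_def a_def case_prod_conv using i(2,3,5)
      by (intro norm_commutator_evolve_interaction_a_priori) auto
  next
    fix S :: real assume S: "0 \<le> S" and hyp: "\<forall>i\<in>I. f i \<le> S * a i"
    show "\<forall>i\<in>I. f i \<le> (2 * norm B + S / 2) * a i"
    proof
      fix i assume "i \<in> I"
      then obtain Z' \<sigma> where i: "i = (Z', \<sigma>)" "Z' \<subseteq> \<Lambda>" "\<sigma> \<in> {0..s}"
        unfolding I_def by blast
      have "norm (commutator (evolve (hamiltonian \<Psi> \<Lambda>) \<sigma> (\<Psi> Z')) B)
              \<le> (2 * norm B + S / 2) * norm (\<Psi> Z') * sum w Z' * exp (2 * \<kappa> * \<sigma>)"
      proof (rule norm_commutator_evolve_interaction_improve[OF B i(2) _ S])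
        show "0 \<le> \<sigma>"
          using i(3) by simp
        fix Z'' \<tau> assume "Z'' \<subseteq> \<Lambda>" "Z'' \<noteq> {}" "\<Psi> Z'' \<noteq> 0" "\<tau> \<in> {0..\<sigma>}"
        then have "(Z'', \<tau>) \<in> I"
          unfolding I_def using i(3) by auto
        then have "f (Z'', \<tau>) \<le> S * a (Z'', \<tau>)"
          using hyp by blast
        then show "norm (commutator (evolve (hamiltonian \<Psi> \<Lambda>) \<tau> (\<Psi> Z'')) B)
                     \<le> S * norm (\<Psi> Z'') * sum w Z'' * exp (2 * \<kappa> * \<tau>)"
          unfolding f_def a_def by (simp add: mult.assoc)
      qed
      then show "f i \<le> (2 * norm B + S / 2) * a i"
        unfolding i f_def a_def by (simp add: mult.assoc)
    qed
  qed
  then show ?thesis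
    unfolding f_def a_def by (simp add: mult.assoc)
qed (simp add: commutator_def)

lemma norm_commutator_evolve_le:
  assumes B: "\<forall>a\<in>\<A> Y. B * a = a * B" and X: "finite X" "X \<subseteq> Y" and A: "A \<in> \<A> X"
    and t: "0 \<le> t"
  shows "norm (commutator (evolve (hamiltonian \<Psi> \<Lambda>) t A) B)
           \<le> 2 * norm A * norm B * sum w (phi_boundary \<Psi> X) * exp (2 * \<kappa> * t)"
proof -
  define K where "K = sum \<Psi> {Z \<in> Pow \<Lambda>. Z \<subseteq> X \<or> Z \<inter> X = {}}"
  define L where "L = sum \<Psi> {Z \<in> Pow \<Lambda>. \<not> (Z \<subseteq> X \<or> Z \<inter> X = {})}"
  define W where "W = sum w (phi_boundary \<Psi> X)"
  define g where "g \<sigma> = norm B * W * exp (2 * \<kappa> * \<sigma>)" for \<sigma>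
  have H: "hamiltonian \<Psi> \<Lambda> = K + L"
    unfolding K_def L_def by (rule hamiltonian_split[OF finite_volume])
  have fin_boundary: "finite (phi_boundary \<Psi> X)"
    using X unfolding phi_boundary_def by simp
  have "norm (commutator (evolve (K + L) t A) B)
          \<le> norm (commutator (evolve K t A) B) + 2 * norm A * (g t - g 0)"
  proof (rule norm_commutator_evolve_perturbation_le[where g' = "\<lambda>\<sigma>. 2 * \<kappa> * norm B * W * exp (2 * \<kappa> * \<sigma>)"])
    show "st K = - K" "st L = - L"
      unfolding K_def L_def using finite_volume by (auto intro: skew_sum_interaction)
    show "(g has_real_derivative 2 * \<kappa> * norm B * W * exp (2 * \<kappa> * \<sigma>)) (at \<sigma>)" for \<sigma>
      unfolding g_def by (auto intro!: derivative_eq_intros)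
    fix \<sigma> assume \<sigma>: "\<sigma> \<in> {0..t}"
    have "norm (commutator (evolve (K + L) \<sigma> (sum \<Psi> {Z \<in> Pow \<Lambda>. \<not> (Z \<subseteq> X \<or> Z \<inter> X = {})})) B)
            \<le> 4 * norm B * exp (2 * \<kappa> * \<sigma>) * \<kappa> / 2 * W"
      unfolding W_def
    proof (rule norm_commutator_evolve_sum_interaction_le)
      fix Z assume "Z \<in> {Z \<in> Pow \<Lambda>. \<not> (Z \<subseteq> X \<or> Z \<inter> X = {})}" "\<Psi> Z \<noteq> 0"
      then show "Z \<inter> phi_boundary \<Psi> X \<noteq> {}"
        unfolding phi_boundary_def using finite_volume finite_subset by blast
    next
      fix Z assume "Z \<in> {Z \<in> Pow \<Lambda>. \<not> (Z \<subseteq> X \<or> Z \<inter> X = {})}" "Z \<noteq> {}"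
      then show "norm (commutator (evolve (K + L) \<sigma> (\<Psi> Z)) B)
                   \<le> 4 * norm B * exp (2 * \<kappa> * \<sigma>) * (norm (\<Psi> Z) * sum w Z)"
        using norm_commutator_evolve_interaction_le[OF B, of Z \<sigma>] \<sigma> by (simp add: H algebra_simps)
    qed (use fin_boundary in auto)
    then show "norm (commutator (evolve (K + L) \<sigma> L) B) \<le> 2 * \<kappa> * norm B * W * exp (2 * \<kappa> * \<sigma>)"
      unfolding L_def[symmetric] by (simp add: algebra_simps)
  qed (use t in simp)
  also have "commutator (evolve K t A) B = 0"
    unfolding K_def by (rule commutator_evolve_decoupled[OF finite_volume X(1) finite_Y X(2) A B])
  also have "2 * norm A * (g t - g 0) \<le> 2 * norm A * norm B * W * exp (2 * \<kappa> * t)"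
    unfolding g_def W_def using sum_weight_nonneg by (simp add: algebra_simps)
  finally show ?thesis
    unfolding H W_def by simp
qed

end

lemma metric_onD:
  assumes "metric_on d"
  shows "0 \<le> d x y" and "d x x = 0" and "d x z \<le> d x y + d y z"
  using assms unfolding metric_on_def by blast+

lemma setdist_d_singleton_nonpos:
  assumes "metric_on d" "z \<in> S"
  shows "setdist_d d {z} S \<le> 0"
proof -
  have "Inf {d x y |x y. x \<in> {z} \<and> y \<in> S} \<le> d z z"
    using assms metric_onD(1)[OF assms(1)] by (intro cInf_lower bdd_belowI[where m = 0]) auto
  then show ?thesis
    unfolding setdist_d_def using metric_onD(2)[OF assms(1)] by simp
qed

lemma setdist_d_singleton_le:
  assumes "metric_on d"
  shows "setdist_d d {x} S \<le> setdist_d d {z} S + d x z"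
proof (cases "S = {}")
  case True
  then show ?thesis
    unfolding setdist_d_def using metric_onD(1)[OF assms] by simp
next
  case False
  have "Inf {d a b |a b. a \<in> {x} \<and> b \<in> S} - d x z \<le> Inf {d a b |a b. a \<in> {z} \<and> b \<in> S}"
  proof (rule cInf_greatest)
    fix e assume "e \<in> {d a b |a b. a \<in> {z} \<and> b \<in> S}"
    then obtain y where y: "y \<in> S" "e = d z y" by blast
    have "Inf {d a b |a b. a \<in> {x} \<and> b \<in> S} \<le> d x y"
      using y metric_onD(1)[OF assms] by (intro cInf_lower bdd_belowI[where m = 0]) auto
    also have "\<dots> \<le> d x z + d z y"
      by (rule metric_onD(3)[OF assms])
    finally show "Inf {d a b |a b. a \<in> {x} \<and> b \<in> S} - d x z \<le> e"
      using y by simp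
  qed (use False in auto)
  then show ?thesis
    unfolding setdist_d_def by simp
qed

lemma setdist_d_le_singleton:
  assumes "metric_on d" "x \<in> X"
  shows "setdist_d d X S \<le> setdist_d d {x} S"
proof (cases "S = {}")
  case False
  show ?thesis
    unfolding setdist_d_def
    using False assms metric_onD(1)[OF assms(1)]
    by (intro cInf_superset_mono bdd_belowI[where m = 0]) auto
qed (simp add: setdist_d_def)

lemma dist_le_diam_d:
  assumes "finite Z" "x \<in> Z" "z \<in> Z"
  shows "d x z \<le> diam_d d Z"
proof -
  have "{d x y |x y. x \<in> Z \<and> y \<in> Z} = (\<lambda>(x, y). d x y) ` (Z \<times> Z)"
    by auto
  then have "finite {d x y |x y. x \<in> Z \<and> y \<in> Z}"
    using assms(1) by simp
  then have "d x z \<le> Sup {d x y |x y. x \<in> Z \<and> y \<in> Z}"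
    using assms by (intro cSup_upper bdd_above_finite) auto
  then show ?thesis
    unfolding diam_d_def using assms by auto
qed

lemma card_ball_bounded_of_F_function:
  assumes "is_F_function d F" "metric_on d" "0 \<le> r"
  obtains N where "\<And>Z x. finite Z \<Longrightarrow> \<forall>z\<in>Z. d x z \<le> r \<Longrightarrow> real (card Z) \<le> N"
proof -
  obtain C where C: "\<And>x. (\<lambda>y. F (d x y)) summable_on UNIV" "\<And>x. (\<Sum>\<^sub>\<infinity>y. F (d x y)) \<le> C"
    using assms(1) unfolding is_F_function_def by blast
  have F_pos: "0 < F s" if "0 \<le> s" for s
    using assms(1) that unfolding is_F_function_def by blast
  have F_anti: "F s \<le> F s'" if "0 \<le> s'" "s' \<le> s" for s s'
    using assms(1) that unfolding is_F_function_def by blast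
  have "real (card Z) \<le> C / F r" if Z: "finite Z" "\<forall>z\<in>Z. d x z \<le> r" for Z x
  proof -
    have "real (card Z) * F r = (\<Sum>z\<in>Z. F r)"
      by simp
    also have "\<dots> \<le> (\<Sum>z\<in>Z. F (d x z))"
      using Z metric_onD(1)[OF assms(2)] by (intro sum_mono F_anti) auto
    also have "\<dots> \<le> (\<Sum>\<^sub>\<infinity>y. F (d x y))"
      using Z C(1) F_pos metric_onD(1)[OF assms(2)]
      by (intro finite_sum_le_infsum) (auto intro: less_imp_le)
    also have "\<dots> \<le> C"
      by (rule C(2))
    finally show ?thesis
      using F_pos[OF assms(3)] by (simp add: pos_le_divide_eq)
  qed
  then show ?thesis
    using that by blast
qed

lemma sum_interaction_weight_le:
  fixes \<Psi> :: "'g set \<Rightarrow> 'b::real_normed_vector" and w :: "'g \<Rightarrow> real"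
  assumes "finite \<Lambda>" "0 \<le> w x" "0 \<le> \<mu>"
    and w_le: "\<And>z. w z \<le> exp (\<mu> * d x z) * w x"
    and diam: "\<And>Z z. Z \<subseteq> \<Lambda> \<Longrightarrow> \<Psi> Z \<noteq> 0 \<Longrightarrow> x \<in> Z \<Longrightarrow> z \<in> Z \<Longrightarrow> d x z \<le> r"
    and card: "\<And>Z. Z \<subseteq> \<Lambda> \<Longrightarrow> \<Psi> Z \<noteq> 0 \<Longrightarrow> x \<in> Z \<Longrightarrow> real (card Z) \<le> N"
    and bounded: "(\<Sum>Z | Z \<subseteq> \<Lambda> \<and> x \<in> Z. norm (\<Psi> Z) / real (card Z)) \<le> C"
  shows "(\<Sum>Z | Z \<subseteq> \<Lambda> \<and> x \<in> Z. norm (\<Psi> Z) * sum w Z) \<le> exp (\<mu> * r) * N\<^sup>2 * C * w x"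
proof -
  define E where "E = N\<^sup>2 * exp (\<mu> * r) * w x"
  have E_nonneg: "0 \<le> E"
    unfolding E_def using assms(2) by simp
  have "norm (\<Psi> Z) * sum w Z \<le> norm (\<Psi> Z) / real (card Z) * E" if Z: "Z \<subseteq> \<Lambda>" "x \<in> Z" for Z
  proof (cases "\<Psi> Z = 0")
    case False
    have card_pos: "0 < real (card Z)"
      using Z assms(1) finite_subset card_gt_0_iff by fastforce
    have "sum w Z \<le> (\<Sum>z\<in>Z. exp (\<mu> * r) * w x)"
    proof (rule sum_mono)
      fix z assume "z \<in> Z"
      then have "exp (\<mu> * d x z) \<le> exp (\<mu> * r)"
        using diam[OF Z(1) False Z(2)] assms(3) by (simp add: mult_left_mono)
      then show "w z \<le> exp (\<mu> * r) * w x"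
        using w_le[of z] assms(2) by (meson mult_right_mono order_trans)
    qed
    also have "\<dots> = real (card Z) * (exp (\<mu> * r) * w x)"
      by simp
    finally have "norm (\<Psi> Z) * sum w Z \<le> norm (\<Psi> Z) * (real (card Z) * (exp (\<mu> * r) * w x))"
      by (simp add: mult_left_mono)
    also have "\<dots> = norm (\<Psi> Z) / real (card Z) * ((real (card Z))\<^sup>2 * exp (\<mu> * r) * w x)"
      using card_pos by (simp add: power2_eq_square field_simps)
    also have "\<dots> \<le> norm (\<Psi> Z) / real (card Z) * E"
      unfolding E_def using card[OF Z(1) False Z(2)] card_pos assms(2)
      by (intro mult_left_mono mult_right_mono power_mono) auto
    finally show ?thesis .
  qed simp
  then have "(\<Sum>Z | Z \<subseteq> \<Lambda> \<and> x \<in> Z. norm (\<Psi> Z) * sum w Z)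
               \<le> (\<Sum>Z | Z \<subseteq> \<Lambda> \<and> x \<in> Z. norm (\<Psi> Z) / real (card Z)) * E"
    unfolding sum_distrib_right by (intro sum_mono) auto
  also have "\<dots> \<le> C * E"
    using bounded E_nonneg by (rule mult_right_mono)
  finally show ?thesis
    unfolding E_def by (simp add: algebra_simps)
qed

context local_interaction
begin

lemma weighted_interaction_exp_weight:
  assumes d: "metric_on d" and \<mu>: "0 < \<mu>"
    and diam: "\<And>Z x z. finite Z \<Longrightarrow> \<Psi> Z \<noteq> 0 \<Longrightarrow> x \<in> Z \<Longrightarrow> z \<in> Z \<Longrightarrow> d x z \<le> r"
    and card: "\<And>Z x. finite Z \<Longrightarrow> \<Psi> Z \<noteq> 0 \<Longrightarrow> x \<in> Z \<Longrightarrow> real (card Z) \<le> N"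
    and bounded: "\<And>\<Lambda> x. finite \<Lambda> \<Longrightarrow> (\<Sum>Z | Z \<subseteq> \<Lambda> \<and> x \<in> Z. norm (\<Psi> Z) / real (card Z)) \<le> C"
    and fin: "finite \<Lambda>" "finite Y"
  shows "weighted_interaction st \<A> \<Psi> \<Lambda> Y (\<lambda>z. exp (- \<mu> * setdist_d d {z} (- Y)))
           (2 * exp (\<mu> * r) * (N\<^sup>2 * C + 1))"
proof (intro weighted_interaction.intro weighted_interaction_axioms.intro)
  define w where "w z = exp (- \<mu> * setdist_d d {z} (- Y))" for z
  have C: "0 \<le> C"
    using bounded[of "{}"] by simp
  show "local_interaction st \<A> \<Psi>"
    by (intro local_interaction.intro cstar_involution_axioms local_interaction_axioms)
  show "finite \<Lambda>" "finite Y" "0 < w x" for x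
    using fin unfolding w_def by simp_all
  show "1 \<le> w x" if "x \<notin> Y" for x
    unfolding w_def using setdist_d_singleton_nonpos[OF d, of x "- Y"] that \<mu>
    by (simp add: mult_nonneg_nonpos)
  show "0 < 2 * exp (\<mu> * r) * (N\<^sup>2 * C + 1)"
    using C by (simp add: add_nonneg_pos)
  fix x
  have "(\<Sum>Z | Z \<subseteq> \<Lambda> \<and> x \<in> Z. norm (\<Psi> Z) * sum w Z) \<le> exp (\<mu> * r) * N\<^sup>2 * C * w x"
  proof (rule sum_interaction_weight_le[where d = d])
    show "w z \<le> exp (\<mu> * d x z) * w x" for z
      unfolding w_def using mult_left_mono[OF setdist_d_singleton_le[OF d, of x "- Y" z], of \<mu>] \<mu>
      by (simp add: exp_add[symmetric] algebra_simps)
    show "d x z \<le> r" "real (card Z) \<le> N" if "Z \<subseteq> \<Lambda>" "\<Psi> Z \<noteq> 0" "x \<in> Z" "z \<in> Z" for Z z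
      using that fin(1) finite_subset diam card by metis+
  qed (use fin \<mu> bounded in \<open>auto simp: w_def\<close>)
  moreover have "0 \<le> exp (\<mu> * r) * w x"
    unfolding w_def by simp
  ultimately show "2 * (\<Sum>Z | Z \<subseteq> \<Lambda> \<and> x \<in> Z. norm (\<Psi> Z) * sum w Z) \<le> 2 * exp (\<mu> * r) * (N\<^sup>2 * C + 1) * w x"
    by (simp add: field_simps)
qed

lemma lieb_robinson_bound:
  assumes d: "metric_on d" and \<mu>: "0 < \<mu>"
    and diam: "\<And>Z x z. finite Z \<Longrightarrow> \<Psi> Z \<noteq> 0 \<Longrightarrow> x \<in> Z \<Longrightarrow> z \<in> Z \<Longrightarrow> d x z \<le> r"
    and card: "\<And>Z x. finite Z \<Longrightarrow> \<Psi> Z \<noteq> 0 \<Longrightarrow> x \<in> Z \<Longrightarrow> real (card Z) \<le> N"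
    and bounded: "\<And>\<Lambda> x. finite \<Lambda> \<Longrightarrow> (\<Sum>Z | Z \<subseteq> \<Lambda> \<and> x \<in> Z. norm (\<Psi> Z) / real (card Z)) \<le> C"
    and fin: "finite \<Lambda>" "finite X" "finite Y" and XY: "X \<subseteq> Y"
    and A: "A \<in> \<A> X" and B: "\<forall>a\<in>\<A> Y. B * a = a * B" and t: "0 \<le> t"
  shows "norm (commutator (evolve (hamiltonian \<Psi> \<Lambda>) t A) B)
           \<le> 2 * norm A * norm B * real (card (phi_boundary \<Psi> X))
               * exp (- \<mu> * (setdist_d d X (- Y) - 4 * exp (\<mu> * r) * (N\<^sup>2 * C + 1) / \<mu> * t))"
proof -
  define w where "w z = exp (- \<mu> * setdist_d d {z} (- Y))" for z
  define \<kappa> where "\<kappa> = 2 * exp (\<mu> * r) * (N\<^sup>2 * C + 1)"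
  interpret weighted_interaction st \<A> \<Psi> \<Lambda> Y w \<kappa>
    unfolding w_def \<kappa>_def using d \<mu> diam card bounded fin(1,3) by (rule weighted_interaction_exp_weight)
  have "w x \<le> exp (- \<mu> * setdist_d d X (- Y))" if "x \<in> phi_boundary \<Psi> X" for x
    unfolding w_def using setdist_d_le_singleton[OF d, of x X "- Y"] that \<mu>
    by (simp add: phi_boundary_def)
  then have boundary_sum:
    "sum w (phi_boundary \<Psi> X) \<le> real (card (phi_boundary \<Psi> X)) * exp (- \<mu> * setdist_d d X (- Y))"
    using sum_bounded_above[of "phi_boundary \<Psi> X" w] by simp
  have "- \<mu> * (setdist_d d X (- Y) - 4 * exp (\<mu> * r) * (N\<^sup>2 * C + 1) / \<mu> * t)
          = - \<mu> * setdist_d d X (- Y) + 2 * \<kappa> * t"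
    unfolding \<kappa>_def using \<mu> by (simp add: field_simps)
  then have rate: "exp (- \<mu> * (setdist_d d X (- Y) - 4 * exp (\<mu> * r) * (N\<^sup>2 * C + 1) / \<mu> * t))
                     = exp (- \<mu> * setdist_d d X (- Y)) * exp (2 * \<kappa> * t)"
    by (simp only: exp_add)
  have "norm (commutator (evolve (hamiltonian \<Psi> \<Lambda>) t A) B)
          \<le> 2 * norm A * norm B * sum w (phi_boundary \<Psi> X) * exp (2 * \<kappa> * t)"
    using B fin(2) XY A t by (rule norm_commutator_evolve_le)
  also have "\<dots> \<le> 2 * norm A * norm B * (real (card (phi_boundary \<Psi> X)) * exp (- \<mu> * setdist_d d X (- Y)))
                      * exp (2 * \<kappa> * t)"
    using boundary_sum by (intro mult_right_mono mult_left_mono) auto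
  finally show ?thesis
    unfolding rate by (simp only: mult.assoc)
qed

end

lemma cstar_involution_of_unital:
  "unital_cstar_algebra st j \<Longrightarrow> cstar_involution st"
  unfolding unital_cstar_algebra_def cstar_involution_def by blast

lemma norm_mult_imaginary_unit:
  assumes "unital_cstar_algebra st j" "c \<in> {j, - j}"
  shows "norm (c * x) = norm x"
proof -
  have "norm (0 *\<^sub>R x + 1 *\<^sub>R (j * x)) = sqrt (0\<^sup>2 + 1\<^sup>2) * norm x"
    using assms(1) unfolding unital_cstar_algebra_def by blast
  then have "norm (j * x) = norm x"
    by simp
  then show ?thesis
    using assms(2) by auto
qed

lemma local_interaction_of_qmb_system:
  assumes qmb: "qmb_system st j \<A> \<Phi>" and A1: "A1 st j \<A> \<Phi>" and c: "c \<in> {j, - j}"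
  shows "local_interaction st \<A> (\<lambda>Z. c * \<Phi> Z)"
proof -
  have alg: "unital_cstar_algebra st j"
    and sub: "\<And>X. finite X \<Longrightarrow> cstar_subalgebra st j (\<A> X)"
    and mono: "\<And>X Y. finite X \<Longrightarrow> finite Y \<Longrightarrow> X \<subseteq> Y \<Longrightarrow> \<A> X \<subseteq> \<A> Y"
    and \<Phi>: "\<And>X. finite X \<Longrightarrow> st (\<Phi> X) = \<Phi> X \<and> \<Phi> X \<in> \<A> X"
    using qmb unfolding qmb_system_def simple_cstar_subalgebra_def by auto
  interpret cstar_involution st
    using alg by (rule cstar_involution_of_unital)
  have j_central: "j * x = x * j" for x
    using alg unfolding unital_cstar_algebra_def by blast
  have c_central: "c * x = x * c" for x
    using c j_central[of x] by auto
  have "st j = - j"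
    using alg unfolding unital_cstar_algebra_def by blast
  then have c_skew: "st c = - c"
    using c star_minus by auto
  show ?thesis
  proof
    fix Z
    show "st (c * \<Phi> Z) = - (c * \<Phi> Z)" if "finite Z"
      using \<Phi>[OF that] by (simp add: star_mult c_skew c_central)
    show "c * \<Phi> Z \<in> \<A> Z" if "finite Z"
    proof -
      have "j * \<Phi> Z \<in> \<A> Z"
        using sub[OF that] \<Phi>[OF that] unfolding cstar_subalgebra_def by blast
      moreover have "(- 1) *\<^sub>R (j * \<Phi> Z) \<in> \<A> Z"
        using sub[OF that] calculation unfolding cstar_subalgebra_def by blast
      ultimately show ?thesis
        using c by auto
    qed
  next
    fix Z V a
    assume "finite Z" "finite V" "Z \<inter> V = {}" "a \<in> \<A> V"
    then have "a \<in> local_alg st j \<A> (- Z)"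
      unfolding local_alg_def cstar_generated_def by blast
    then have "\<Phi> Z * a = a * \<Phi> Z"
      using A1 \<open>finite Z\<close> unfolding A1_def by blast
    then show "c * \<Phi> Z * a = a * (c * \<Phi> Z)"
      by (metis c_central mult.assoc)
  qed (use mono in auto)
qed

lemma phi_boundary_cong:
  assumes "\<And>Z. \<Psi> Z = 0 \<longleftrightarrow> \<Phi> Z = 0"
  shows "phi_boundary \<Psi> X = phi_boundary \<Phi> X"
  unfolding phi_boundary_def using assms by simp

lemma dynamics_eq_evolve:
  "dynamics j \<Phi> \<Lambda> t A = evolve (hamiltonian (\<lambda>Z. j * \<Phi> Z) \<Lambda>) t A"
  "dynamics j \<Phi> \<Lambda> t A = evolve (hamiltonian (\<lambda>Z. - j * \<Phi> Z) \<Lambda>) (- t) A"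
  unfolding dynamics_def evolve_def hamiltonian_def by (simp_all add: sum_distrib_left sum_negf)

lemma finite_range_dist_leE:
  assumes "finite_range d \<Phi>"
  obtains r where "0 < r" "\<And>Z x z. finite Z \<Longrightarrow> \<Phi> Z \<noteq> 0 \<Longrightarrow> x \<in> Z \<Longrightarrow> z \<in> Z \<Longrightarrow> d x z \<le> r"
proof -
  obtain r where "0 < r" "\<And>Z. finite Z \<Longrightarrow> diam_d d Z > r \<Longrightarrow> \<Phi> Z = 0"
    using assms unfolding finite_range_def by blast
  then show ?thesis
    using that dist_le_diam_d by (metis not_le order_trans)
qed

lemma bounded_interaction_sum_leE:
  assumes "bounded_interaction \<Phi>"
  obtains C where "\<And>\<Lambda> x. finite \<Lambda> \<Longrightarrow> (\<Sum>Z | Z \<subseteq> \<Lambda> \<and> x \<in> Z. norm (\<Phi> Z) / real (card Z)) \<le> C"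
proof -
  obtain C where C: "\<And>x. (\<lambda>X. norm (\<Phi> X) / real (card X)) summable_on {X. finite X \<and> x \<in> X}"
    "\<And>x. (\<Sum>\<^sub>\<infinity>X\<in>{X. finite X \<and> x \<in> X}. norm (\<Phi> X) / real (card X)) \<le> C"
    using assms unfolding bounded_interaction_def by blast
  have "(\<Sum>Z | Z \<subseteq> \<Lambda> \<and> x \<in> Z. norm (\<Phi> Z) / real (card Z)) \<le> C" if "finite \<Lambda>" for \<Lambda> x
  proof -
    have "(\<Sum>Z | Z \<subseteq> \<Lambda> \<and> x \<in> Z. norm (\<Phi> Z) / real (card Z))
            \<le> (\<Sum>\<^sub>\<infinity>X\<in>{X. finite X \<and> x \<in> X}. norm (\<Phi> X) / real (card X))"
      using C(1) that by (intro finite_sum_le_infsum) (auto intro: finite_subset)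
    then show ?thesis
      using C(2) by (rule order_trans)
  qed
  then show ?thesis
    using that by blast
qed

lemma qmb_system_lieb_robinson_bound:
  assumes qmb: "qmb_system st j \<A> \<Phi>" and A1: "A1 st j \<A> \<Phi>"
    and d: "metric_on d" and \<mu>: "0 < \<mu>"
    and diam: "\<And>Z x z. finite Z \<Longrightarrow> \<Phi> Z \<noteq> 0 \<Longrightarrow> x \<in> Z \<Longrightarrow> z \<in> Z \<Longrightarrow> d x z \<le> r"
    and card: "\<And>Z x. finite Z \<Longrightarrow> \<Phi> Z \<noteq> 0 \<Longrightarrow> x \<in> Z \<Longrightarrow> real (card Z) \<le> N"
    and bounded: "\<And>\<Lambda> x. finite \<Lambda> \<Longrightarrow> (\<Sum>Z | Z \<subseteq> \<Lambda> \<and> x \<in> Z. norm (\<Phi> Z) / real (card Z)) \<le> C"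
    and fin: "finite \<Lambda>" "finite X" "finite Y" and XY: "X \<subseteq> Y"
    and A: "A \<in> \<A> X" and B: "\<forall>a\<in>\<A> Y. B * a = a * B"
  shows "norm (dynamics j \<Phi> \<Lambda> t A * B - B * dynamics j \<Phi> \<Lambda> t A)
           \<le> 2 * norm A * norm B * real (card (phi_boundary \<Phi> X))
               * exp (- \<mu> * (setdist_d d X (- Y) - 4 * exp (\<mu> * r) * (N\<^sup>2 * C + 1) / \<mu> * \<bar>t\<bar>))"
proof -
  obtain c where c: "c \<in> {j, - j}"
    and dyn: "dynamics j \<Phi> \<Lambda> t A = evolve (hamiltonian (\<lambda>Z. c * \<Phi> Z) \<Lambda>) \<bar>t\<bar> A"
  proof (cases "0 \<le> t")
    case True
    then show ?thesis
      using that[of j] dynamics_eq_evolve(1)[of j \<Phi> \<Lambda> t A] by simp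
  next
    case False
    then show ?thesis
      using that[of "- j"] dynamics_eq_evolve(2)[of j \<Phi> \<Lambda> t A] by simp
  qed
  interpret local_interaction st \<A> "\<lambda>Z. c * \<Phi> Z"
    using qmb A1 c by (rule local_interaction_of_qmb_system)
  have norm_c: "norm (c * \<Phi> Z) = norm (\<Phi> Z)" for Z
    using qmb c unfolding qmb_system_def by (blast intro: norm_mult_imaginary_unit)
  then have zero_c: "c * \<Phi> Z = 0 \<longleftrightarrow> \<Phi> Z = 0" for Z
    by (metis norm_eq_zero)
  have "norm (commutator (evolve (hamiltonian (\<lambda>Z. c * \<Phi> Z) \<Lambda>) \<bar>t\<bar> A) B)
          \<le> 2 * norm A * norm B * real (card (phi_boundary (\<lambda>Z. c * \<Phi> Z) X))
              * exp (- \<mu> * (setdist_d d X (- Y) - 4 * exp (\<mu> * r) * (N\<^sup>2 * C + 1) / \<mu> * \<bar>t\<bar>))"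
    using d \<mu> diam card bounded fin XY A B by (intro lieb_robinson_bound) (simp_all add: norm_c zero_c)
  then show ?thesis
    unfolding dyn commutator_def phi_boundary_cong[OF zero_c] .
qed

theorem corollary2p2:
  fixes d :: "'g \<Rightarrow> 'g \<Rightarrow> real"
    and st :: "'a::{real_normed_algebra_1,banach} \<Rightarrow> 'a"
    and j :: "'a"
    and \<A> :: "'g set \<Rightarrow> 'a set"
    and \<Phi> :: "'g set \<Rightarrow> 'a"
  assumes "countable_discrete_metric d"
    and "\<exists>F. is_F_function d F"
    and "qmb_system st j \<A> \<Phi>"
    and "A1 st j \<A> \<Phi>"
    and "bounded_interaction \<Phi>"
    and "finite_range d \<Phi>"
  shows "\<forall>\<mu>>0. \<exists>c v. c > 0 \<and> v > 0 \<and>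
           (\<forall>X Y \<Lambda> A B t. finite X \<longrightarrow> finite Y \<longrightarrow> finite \<Lambda> \<longrightarrow> X \<subseteq> Y \<inter> \<Lambda> \<longrightarrow>
              A \<in> \<A> X \<longrightarrow> (\<forall>a\<in>\<A> Y. B * a = a * B) \<longrightarrow>
              norm (dynamics j \<Phi> \<Lambda> t A * B - B * dynamics j \<Phi> \<Lambda> t A)
                \<le> c * norm A * norm B * real (card (phi_boundary \<Phi> X))
                    * exp (- \<mu> * (setdist_d d X (- Y) - v * \<bar>t\<bar>)))"
proof -
  have d: "metric_on d"
    using assms(1) unfolding countable_discrete_metric_def by blast
  obtain F where F: "is_F_function d F"
    using assms(2) by blast
  obtain r where r: "0 < r" and diam: "\<And>Z x z. finite Z \<Longrightarrow> \<Phi> Z \<noteq> 0 \<Longrightarrow> x \<in> Z \<Longrightarrow> z \<in> Z \<Longrightarrow> d x z \<le> r"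
    using finite_range_dist_leE[OF assms(6)] by blast
  obtain N where N: "\<And>Z x. finite Z \<Longrightarrow> \<forall>z\<in>Z. d x z \<le> r \<Longrightarrow> real (card Z) \<le> N"
    using card_ball_bounded_of_F_function[OF F d, of r] r by auto
  have card: "real (card Z) \<le> N" if "finite Z" "\<Phi> Z \<noteq> 0" "x \<in> Z" for Z x
    using that N diam by blast
  obtain C where C: "\<And>\<Lambda> x. finite \<Lambda> \<Longrightarrow> (\<Sum>Z | Z \<subseteq> \<Lambda> \<and> x \<in> Z. norm (\<Phi> Z) / real (card Z)) \<le> C"
    using bounded_interaction_sum_leE[OF assms(5)] by blast
  have "0 \<le> C"
    using C[of "{}"] by simp
  show ?thesis
  proof (intro allI impI exI conjI)
    fix \<mu> :: real
    assume "0 < \<mu>"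
    show "(0::real) < 2"
      by simp
    show "0 < 4 * exp (\<mu> * r) * (N\<^sup>2 * C + 1) / \<mu>"
      using \<open>0 < \<mu>\<close> \<open>0 \<le> C\<close> by (simp add: add_nonneg_pos)
  qed (rule qmb_system_lieb_robinson_bound[OF assms(3,4) d _ diam card C], auto)
qed

end
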